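(* Let $\xi$ be a model and let $\phi$ be the unique minimizer of $P_{0,\xi}$ on $\mathcal{C}$. Then $\phi$ is constant on $[0,1]$ if and only if $\xi(t)=a t^2$ for some $a>0$ (i.e. $\xi=\xi_{SK}$).
   Context: A model is $\xi(t)=\sum_{p\ge2}\beta_p^2t^p$, real $\beta_p$ not all zero, with $\xi(1+\epsilon)<\infty$ for some $\epsilon>0$; $\xi_{SK}$ denotes a model with only the $p=2$ term, $\xi(t)=\beta_2^2t^2$. $\mathcal{C}$ is the set of $\phi\in C([0,1])$ with $\phi\ge0$, non-increasing and concave, and $P_{0,\xi}(\phi)=\int_0^1\big(\xi''(x)\phi(x)+\frac1{\phi(x)}\big)dx$. *)

theory Defs
  imports "HOL-Analysis.Analysis"
begin

definition is_model :: "(nat \<Rightarrow> real) \<Rightarrow> bool" where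
  "is_model \<beta> \<longleftrightarrow> (\<exists>p\<ge>2. \<beta> p \<noteq> 0) \<and>
     (\<exists>\<epsilon>>0. summable (\<lambda>p. if p \<ge> 2 then (\<beta> p)^2 * (1 + \<epsilon>)^p else 0))"

definition xi :: "(nat \<Rightarrow> real) \<Rightarrow> real \<Rightarrow> real" where
  "xi \<beta> t = (\<Sum>p. if p \<ge> 2 then (\<beta> p)^2 * t^p else 0)"

definition classC :: "(real \<Rightarrow> real) set" where
  "classC = {\<phi>. continuous_on {0..1} \<phi> \<and> (\<forall>x\<in>{0..1}. 0 \<le> \<phi> x) \<and>
              antimono_on {0..1} \<phi> \<and> concave_on {0..1} \<phi>}"

text \<open>P_{0,xi}(phi) as an extended nonnegative real; 1/phi(x) is read as +infinity where phi(x)=0.\<close>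
definition P0 :: "(nat \<Rightarrow> real) \<Rightarrow> (real \<Rightarrow> real) \<Rightarrow> ennreal" where
  "P0 \<beta> \<phi> = (\<integral>\<^sup>+ x \<in> {0..1}.
      ennreal (deriv (deriv (xi \<beta>)) x * \<phi> x) + (if \<phi> x = 0 then \<infinity> else ennreal (1 / \<phi> x)) \<partial>lborel)"

definition is_minimizer :: "(nat \<Rightarrow> real) \<Rightarrow> (real \<Rightarrow> real) \<Rightarrow> bool" where
  "is_minimizer \<beta> \<phi> \<longleftrightarrow> \<phi> \<in> classC \<and> (\<forall>\<psi>\<in>classC. P0 \<beta> \<phi> \<le> P0 \<beta> \<psi>)"

end

theory Submission
  imports Defs
begin

(* If the constant c minimises P, compare it with the affine competitors
   c (1 + s (sigma + tau x)), which stay in the class for tau <= 0 and small s > 0.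
   Expanding 1/(1 + u) to second order, the first-order terms in s must be
   nonnegative; the directions (sigma, tau) = (1,0), (-1,0), (0,-1) give
   c A = 1/c and 2 c B <= 1/c for A = int_0^1 xi'' = xi'(1) and
   B = int_0^1 x xi''(x) dx = xi'(1) - xi(1).  Hence xi'(1) <= 2 xi(1), i.e.
   sum_p p beta_p^2 <= 2 sum_p beta_p^2, which forces beta_p = 0 for p >= 3.
   Conversely, for xi(t) = a t^2 the weight xi'' = 2a is constant and the constant
   1/sqrt(2a) minimises 2a y + 1/y pointwise, so by uniqueness the minimiser is
   constant. *)

definition energy :: "(real \<Rightarrow> real) \<Rightarrow> (real \<Rightarrow> real) \<Rightarrow> ennreal" where
  "energy G \<phi> = (\<integral>\<^sup>+ x \<in> {0..1}.
      ennreal (G x * \<phi> x) + (if \<phi> x = 0 then \<infinity> else ennreal (1 / \<phi> x)) \<partial>lborel)"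

lemma P0_eq_energy: "P0 \<beta> = energy (deriv (deriv (xi \<beta>)))"
  unfolding P0_def energy_def ..

lemma energy_cong: "(\<And>x. x \<in> {0..1} \<Longrightarrow> \<phi> x = \<psi> x) \<Longrightarrow> energy G \<phi> = energy G \<psi>"
  unfolding energy_def by (rule set_nn_integral_cong) auto

lemma energy_zero: "energy G (\<lambda>_. 0) = \<infinity>"
proof -
  have "energy G (\<lambda>_. 0) = (\<integral>\<^sup>+ x. \<infinity> * indicator {0..1::real} x \<partial>lborel)"
    unfolding energy_def by (simp add: mult.commute)
  also have "\<dots> = \<infinity>" by (subst nn_integral_cmult_indicator) auto
  finally show ?thesis .
qed

lemma energy_eq_nn_integral:
  assumes "\<And>x. x \<in> {0..1} \<Longrightarrow> 0 \<le> G x" and "\<And>x. x \<in> {0..1} \<Longrightarrow> 0 < \<psi> x"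
  shows "energy G \<psi> = (\<integral>\<^sup>+ x. ennreal (G x * \<psi> x + 1 / \<psi> x) * indicator {0..1} x \<partial>lborel)"
  unfolding energy_def
proof (intro nn_integral_cong)
  fix x :: real
  show "(ennreal (G x * \<psi> x) + (if \<psi> x = 0 then \<infinity> else ennreal (1 / \<psi> x))) * indicator {0..1} x
      = ennreal (G x * \<psi> x + 1 / \<psi> x) * indicator {0..1} x"
  proof (cases "x \<in> {0..1}")
    case True
    then have "0 < \<psi> x" using assms(2) by blast
    with assms(1)[OF True] have "0 \<le> G x * \<psi> x" by simp
    with \<open>0 < \<psi> x\<close> True show ?thesis by simp
  qed simp
qed

lemma energy_has_integral:
  assumes "\<And>x. x \<in> {0..1} \<Longrightarrow> 0 \<le> G x" and "\<And>x. x \<in> {0..1} \<Longrightarrow> 0 < \<psi> x"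
    and "((\<lambda>x. G x * \<psi> x + 1 / \<psi> x) has_integral I) {0..1}"
  shows "energy G \<psi> = ennreal I"
proof -
  have "energy G \<psi> = (\<integral>\<^sup>+ x. ennreal (G x * \<psi> x + 1 / \<psi> x) * indicator {0..1} x \<partial>lborel)"
    using assms(1,2) by (rule energy_eq_nn_integral)
  also have "\<dots> = ennreal I"
    by (rule nn_integral_has_integral_lebesgue'[OF _ assms(3)])
      (use assms(1,2) in \<open>simp add: less_imp_le\<close>)
  finally show ?thesis .
qed

lemma energy_le_integral:
  assumes "\<And>x. x \<in> {0..1} \<Longrightarrow> 0 \<le> G x" and "\<And>x. x \<in> {0..1} \<Longrightarrow> 0 < \<psi> x"
    and "\<And>x. x \<in> {0..1} \<Longrightarrow> G x * \<psi> x + 1 / \<psi> x \<le> b x" and "(b has_integral I) {0..1}"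
  shows "energy G \<psi> \<le> ennreal I"
proof -
  have "energy G \<psi> = (\<integral>\<^sup>+ x. ennreal (G x * \<psi> x + 1 / \<psi> x) * indicator {0..1} x \<partial>lborel)"
    using assms(1,2) by (rule energy_eq_nn_integral)
  also have "\<dots> \<le> (\<integral>\<^sup>+ x. ennreal (b x) * indicator {0..1} x \<partial>lborel)"
    by (intro nn_integral_mono) (auto simp: indicator_def intro!: ennreal_leI assms(3))
  also have "\<dots> = ennreal I"
  proof (rule nn_integral_has_integral_lebesgue'[OF _ assms(4)])
    fix x :: real assume "x \<in> {0..1}"
    with assms(1,2) have "0 \<le> G x * \<psi> x + 1 / \<psi> x" by (simp add: less_imp_le)
    with assms(3)[OF \<open>x \<in> {0..1}\<close>] show "0 \<le> b x" by linarith
  qed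
  finally show ?thesis .
qed

lemma energy_const:
  assumes "\<And>x. x \<in> {0..1} \<Longrightarrow> 0 \<le> G x" and "(G has_integral A) {0..1}" and "0 < c"
  shows "energy G (\<lambda>_. c) = ennreal (c * A + 1 / c)"
proof (rule energy_has_integral)
  show "((\<lambda>x. G x * c + 1 / c) has_integral c * A + 1 / c) {0..1}"
    using has_integral_add[OF has_integral_mult_left[OF assms(2), of c] has_integral_const_real[of "1 / c" 0 1]]
    by (simp add: mult.commute)
qed (use assms in auto)

lemma energy_le_pointwise:
  assumes "\<And>x. x \<in> {0..1} \<Longrightarrow> 0 \<le> G x" and "\<And>x. x \<in> {0..1} \<Longrightarrow> 0 < \<phi> x"
    and "\<And>x. x \<in> {0..1} \<Longrightarrow> 0 \<le> \<psi> x"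
    and "\<And>x y. x \<in> {0..1} \<Longrightarrow> 0 < y \<Longrightarrow> G x * \<phi> x + 1 / \<phi> x \<le> G x * y + 1 / y"
  shows "energy G \<phi> \<le> energy G \<psi>"
proof -
  have "energy G \<phi> = (\<integral>\<^sup>+ x. ennreal (G x * \<phi> x + 1 / \<phi> x) * indicator {0..1} x \<partial>lborel)"
    using assms(1,2) by (rule energy_eq_nn_integral)
  also have "\<dots> \<le> energy G \<psi>"
    unfolding energy_def
  proof (intro nn_integral_mono)
    fix x :: real
    show "ennreal (G x * \<phi> x + 1 / \<phi> x) * indicator {0..1} x
        \<le> (ennreal (G x * \<psi> x) + (if \<psi> x = 0 then \<infinity> else ennreal (1 / \<psi> x))) * indicator {0..1} x"
    proof (cases "x \<in> {0..1} \<and> \<psi> x \<noteq> 0")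
      case True
      then have "0 < \<psi> x" using assms(3) by force
      then have "ennreal (G x * \<phi> x + 1 / \<phi> x) \<le> ennreal (G x * \<psi> x + 1 / \<psi> x)"
        using True assms(4) by (intro ennreal_leI) blast
      also have "\<dots> = ennreal (G x * \<psi> x) + ennreal (1 / \<psi> x)"
        using True assms(1) \<open>0 < \<psi> x\<close> by (intro ennreal_plus) auto
      finally show ?thesis using True by simp
    next
      case False
      then show ?thesis by (cases "x \<in> {0..1}") auto
    qed
  qed
  finally show ?thesis .
qed

lemma affine_in_classC:
  fixes \<alpha> \<gamma> :: real
  assumes "\<gamma> \<le> 0" and "0 \<le> \<alpha> + \<gamma>"
  shows "(\<lambda>x. \<alpha> + \<gamma> * x) \<in> classC"
  unfolding classC_def
proof (intro CollectI conjI ballI)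
  show "continuous_on {0..1} (\<lambda>x. \<alpha> + \<gamma> * x)" by (intro continuous_intros)
  fix x :: real assume "x \<in> {0..1}"
  then have "\<gamma> * 1 \<le> \<gamma> * x" using assms by (intro mult_left_mono_neg) auto
  then show "0 \<le> \<alpha> + \<gamma> * x" using assms by simp
next
  show "antimono_on {0..1} (\<lambda>x. \<alpha> + \<gamma> * x)"
    by (auto simp: monotone_on_def intro!: mult_left_mono_neg assms)
  show "concave_on {0..1} (\<lambda>x. \<alpha> + \<gamma> * x)"
    by (auto simp: concave_on_iff algebra_simps simp flip: distrib_right)
qed

lemma const_in_classC: "0 \<le> c \<Longrightarrow> (\<lambda>_. c) \<in> classC"
  using affine_in_classC[of 0 c] by simp

lemma inverse_one_plus_le:
  fixes u s :: real
  assumes "\<bar>u\<bar> \<le> s" and "s \<le> 1/2"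
  shows "1 / (1 + u) \<le> 1 - u + 2 * s^2"
proof -
  have u: "-1/2 \<le> u" "0 < 1 + u" using assms by auto
  have "1 \<le> 1 + u^2 * (1 + 2 * u)" using u by simp
  also have "\<dots> = (1 - u + 2 * u^2) * (1 + u)" by (simp add: algebra_simps power2_eq_square)
  finally have "1 / (1 + u) \<le> 1 - u + 2 * u^2" using u by (simp add: divide_le_eq)
  also have "u^2 \<le> s^2" using assms(1) by (metis abs_ge_zero power2_abs power_mono)
  then have "1 - u + 2 * u^2 \<le> 1 - u + 2 * s^2" by simp
  finally show ?thesis .
qed

lemma energy_affine_perturbation_le:
  fixes c s \<sigma> \<tau> :: real
  assumes G_nonneg: "\<And>x. x \<in> {0..1} \<Longrightarrow> 0 \<le> G x"
    and GA: "(G has_integral A) {0..1}" and GB: "((\<lambda>x. G x * x) has_integral B) {0..1}"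
    and "0 < c" "0 < s" "s \<le> 1/2" "\<bar>\<sigma>\<bar> + \<bar>\<tau>\<bar> \<le> 1"
  shows "energy G (\<lambda>x. c * (1 + s * (\<sigma> + \<tau> * x)))
    \<le> ennreal (c * A + 1 / c + s * (c * (\<sigma> * A + \<tau> * B) - (\<sigma> + \<tau> / 2) / c) + 2 * s^2 / c)"
proof (rule energy_le_integral[OF G_nonneg])
  define h where "h x = \<sigma> + \<tau> * x" for x
  have sh: "\<bar>s * h x\<bar> \<le> s" if "x \<in> {0..1}" for x
  proof -
    have "\<bar>\<tau> * x\<bar> \<le> \<bar>\<tau>\<bar>" using that by (auto simp: abs_mult intro: mult_left_le)
    then have "\<bar>h x\<bar> \<le> 1" using assms(7) unfolding h_def by linarith
    then show ?thesis using \<open>0 < s\<close> by (auto simp: abs_mult intro: mult_left_le)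
  qed
  show "0 < c * (1 + s * (\<sigma> + \<tau> * x))" if "x \<in> {0..1}" for x
    using sh[OF that] \<open>0 < c\<close> \<open>s \<le> 1/2\<close> unfolding h_def by (simp add: abs_le_iff)
  show "G x * (c * (1 + s * (\<sigma> + \<tau> * x))) + 1 / (c * (1 + s * (\<sigma> + \<tau> * x)))
      \<le> G x * (c * (1 + s * (\<sigma> + \<tau> * x))) + (1 - s * (\<sigma> + \<tau> * x) + 2 * s^2) / c"
    if "x \<in> {0..1}" for x
  proof -
    have "1 / (1 + s * h x) \<le> 1 - s * h x + 2 * s^2"
      by (rule inverse_one_plus_le[OF sh[OF that] \<open>s \<le> 1/2\<close>])
    then have "1 / (1 + s * h x) / c \<le> (1 - s * h x + 2 * s^2) / c"
      using \<open>0 < c\<close> by (intro divide_right_mono) auto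
    then show ?thesis unfolding h_def by (simp add: ac_simps)
  qed
  have "((\<lambda>x. (c * (1 + s * \<sigma>)) * G x + (c * s * \<tau>) * (G x * x) + (1 - s * \<sigma> + 2 * s^2) / c - (s * \<tau> / c) * x)
     has_integral (c * (1 + s * \<sigma>)) * A + (c * s * \<tau>) * B + (1 - s * \<sigma> + 2 * s^2) / c - (s * \<tau> / c) * (1/2)) {0..1}"
    using ident_has_integral[of 0 1] has_integral_const_real[of "(1 - s * \<sigma> + 2 * s^2) / c" 0 1]
    by (intro has_integral_add has_integral_diff has_integral_mult_right GA GB) (auto simp: power2_eq_square)
  moreover have "(\<lambda>x. (c * (1 + s * \<sigma>)) * G x + (c * s * \<tau>) * (G x * x) + (1 - s * \<sigma> + 2 * s^2) / c - (s * \<tau> / c) * x)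
      = (\<lambda>x. G x * (c * (1 + s * (\<sigma> + \<tau> * x))) + (1 - s * (\<sigma> + \<tau> * x) + 2 * s^2) / c)"
    by (rule ext) (simp add: algebra_simps add_divide_distrib diff_divide_distrib)
  moreover have "(c * (1 + s * \<sigma>)) * A + (c * s * \<tau>) * B + (1 - s * \<sigma> + 2 * s^2) / c - (s * \<tau> / c) * (1/2)
      = c * A + 1 / c + s * (c * (\<sigma> * A + \<tau> * B) - (\<sigma> + \<tau> / 2) / c) + 2 * s^2 / c"
    using \<open>0 < c\<close> by (simp add: field_simps)
  ultimately show "((\<lambda>x. G x * (c * (1 + s * (\<sigma> + \<tau> * x))) + (1 - s * (\<sigma> + \<tau> * x) + 2 * s^2) / c)
      has_integral c * A + 1 / c + s * (c * (\<sigma> * A + \<tau> * B) - (\<sigma> + \<tau> / 2) / c) + 2 * s^2 / c) {0..1}"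
    by simp
qed

lemma nonneg_if_linear_plus_quadratic_nonneg:
  fixes L M :: real
  assumes "\<And>s. 0 < s \<Longrightarrow> s \<le> 1/2 \<Longrightarrow> 0 \<le> s * L + M * s^2"
  shows "0 \<le> L"
proof (rule tendsto_lowerbound)
  show "((\<lambda>s. L + M * s) \<longlongrightarrow> L) (at_right 0)"
    by (auto intro!: tendsto_eq_intros)
  show "\<forall>\<^sub>F s in at_right 0. 0 \<le> L + M * s"
    unfolding eventually_at_right_field
  proof (intro exI[of _ "1/2"] conjI allI impI)
    fix s :: real assume "0 < s" "s < 1/2"
    then have "0 \<le> s * (L + M * s)" using assms[of s] by (simp add: algebra_simps power2_eq_square)
    then show "0 \<le> L + M * s" using \<open>0 < s\<close> by (simp add: zero_le_mult_iff)
  qed simp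
qed simp

lemma constant_minimizer_first_variation:
  fixes c \<sigma> \<tau> :: real
  assumes G_nonneg: "\<And>x. x \<in> {0..1} \<Longrightarrow> 0 \<le> G x"
    and GA: "(G has_integral A) {0..1}" and GB: "((\<lambda>x. G x * x) has_integral B) {0..1}"
    and "0 < c" and min: "\<And>\<psi>. \<psi> \<in> classC \<Longrightarrow> energy G (\<lambda>_. c) \<le> energy G \<psi>"
    and "\<bar>\<sigma>\<bar> + \<bar>\<tau>\<bar> \<le> 1" and "\<tau> \<le> 0"
  shows "(\<sigma> + \<tau> / 2) / c \<le> c * (\<sigma> * A + \<tau> * B)"
proof -
  have "0 \<le> c * (\<sigma> * A + \<tau> * B) - (\<sigma> + \<tau> / 2) / c"
  proof (rule nonneg_if_linear_plus_quadratic_nonneg[where M = "2 / c"])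
    fix s :: real assume s: "0 < s" "s \<le> 1/2"
    have "-1 \<le> \<sigma> + \<tau>" using abs_triangle_ineq[of \<sigma> \<tau>] assms(6) by linarith
    then have "- s \<le> s * (\<sigma> + \<tau>)" using mult_left_mono[of "-1" "\<sigma> + \<tau>" s] s by simp
    then have "0 \<le> c * (1 + s * (\<sigma> + \<tau>))" using s \<open>0 < c\<close> by simp
    moreover have "c * s * \<tau> \<le> 0"
      using s \<open>0 < c\<close> \<open>\<tau> \<le> 0\<close> by (simp add: mult_nonneg_nonpos)
    ultimately have "(\<lambda>x. c * (1 + s * \<sigma>) + c * s * \<tau> * x) \<in> classC"
      by (intro affine_in_classC) (simp_all add: algebra_simps)
    then have "energy G (\<lambda>_. c) \<le> energy G (\<lambda>x. c * (1 + s * (\<sigma> + \<tau> * x)))"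
      using min by (simp add: algebra_simps)
    then have "ennreal (c * A + 1 / c) \<le> energy G (\<lambda>x. c * (1 + s * (\<sigma> + \<tau> * x)))"
      by (simp only: energy_const[OF G_nonneg GA \<open>0 < c\<close>])
    also have "\<dots> \<le> ennreal (c * A + 1 / c + s * (c * (\<sigma> * A + \<tau> * B) - (\<sigma> + \<tau> / 2) / c) + 2 * s^2 / c)"
      using energy_affine_perturbation_le[OF G_nonneg GA GB \<open>0 < c\<close> s assms(6)] .
    finally have "ennreal (c * A + 1 / c)
        \<le> ennreal (c * A + 1 / c + s * (c * (\<sigma> * A + \<tau> * B) - (\<sigma> + \<tau> / 2) / c) + 2 * s^2 / c)" .
    moreover have "0 < c * A + 1 / c"
      using has_integral_nonneg[OF GA G_nonneg] \<open>0 < c\<close> by (simp add: add_nonneg_pos)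
    ultimately show "0 \<le> s * (c * (\<sigma> * A + \<tau> * B) - (\<sigma> + \<tau> / 2) / c) + 2 / c * s^2"
      by (simp add: ennreal_le_iff2)
  qed
  then show ?thesis by simp
qed

lemma constant_minimizer_moment_bound:
  assumes G_nonneg: "\<And>x. x \<in> {0..1} \<Longrightarrow> 0 \<le> G x"
    and GA: "(G has_integral A) {0..1}" and GB: "((\<lambda>x. G x * x) has_integral B) {0..1}"
    and "0 < c" and min: "\<And>\<psi>. \<psi> \<in> classC \<Longrightarrow> energy G (\<lambda>_. c) \<le> energy G \<psi>"
  shows "2 * B \<le> A"
proof -
  note first_variation = constant_minimizer_first_variation[OF G_nonneg GA GB \<open>0 < c\<close> min]
  have "c * A = 1 / c"
    using first_variation[of 1 0] first_variation[of "-1" 0] by simp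
  moreover have "1 / (2 * c) \<ge> c * B"
    using first_variation[of 0 "-1"] by simp
  ultimately have "c * (2 * B) \<le> c * A" by simp
  then show ?thesis using \<open>0 < c\<close> by simp
qed

lemma constant_minimizer_pos:
  assumes G_nonneg: "\<And>x. x \<in> {0..1} \<Longrightarrow> 0 \<le> G x" and GA: "(G has_integral A) {0..1}"
    and "0 \<le> c" and min: "\<And>\<psi>. \<psi> \<in> classC \<Longrightarrow> energy G (\<lambda>_. c) \<le> energy G \<psi>"
  shows "0 < c"
proof (rule ccontr)
  assume "\<not> 0 < c"
  then have "energy G (\<lambda>_. c) = \<infinity>" using \<open>0 \<le> c\<close> energy_zero by simp
  moreover have "energy G (\<lambda>_. c) \<le> ennreal (1 * A + 1 / 1)"
    using min[OF const_in_classC[of 1]] energy_const[OF G_nonneg GA, of 1] by simp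
  ultimately show False by (simp add: top_unique)
qed

lemma energy_const_weight_minimizer:
  assumes "0 < k" and "\<psi> \<in> classC"
  shows "energy (\<lambda>_. k) (\<lambda>_. 1 / sqrt k) \<le> energy (\<lambda>_. k) \<psi>"
proof (rule energy_le_pointwise)
  fix y :: real assume "0 < y"
  have "sqrt (k * y * (1 / y)) \<le> (k * y + 1 / y) / 2"
    using \<open>0 < k\<close> \<open>0 < y\<close> by (intro arith_geo_mean_sqrt) auto
  then show "k * (1 / sqrt k) + 1 / (1 / sqrt k) \<le> k * y + 1 / y"
    using \<open>0 < k\<close> \<open>0 < y\<close> by (simp add: real_div_sqrt)
qed (use assms in \<open>auto simp: classC_def\<close>)

lemma deriv_deriv_eqI:
  fixes f :: "real \<Rightarrow> real"
  assumes "open S" and "x \<in> S"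
    and "\<And>y. y \<in> S \<Longrightarrow> (f has_real_derivative f' y) (at y)"
    and "\<And>y. y \<in> S \<Longrightarrow> (f' has_real_derivative f'' y) (at y)"
  shows "deriv (deriv f) x = f'' x"
proof -
  have "\<forall>\<^sub>F y in nhds x. deriv f y = f' y"
    using eventually_nhds_in_open[OF assms(1,2)]
    by eventually_elim (rule DERIV_imp_deriv[OF assms(3)])
  then have "deriv (deriv f) x = deriv f' x" by (rule deriv_cong_ev) simp
  also have "\<dots> = f'' x" by (rule DERIV_imp_deriv[OF assms(4)[OF assms(2)]])
  finally show ?thesis .
qed

lemma has_integral_second_derivative:
  fixes f :: "real \<Rightarrow> real"
  assumes "a \<le> b"
    and f': "\<And>x. x \<in> {a..b} \<Longrightarrow> (f has_real_derivative f' x) (at x)"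
    and f'': "\<And>x. x \<in> {a..b} \<Longrightarrow> (f' has_real_derivative f'' x) (at x)"
  shows "(f'' has_integral f' b - f' a) {a..b}"
    and "((\<lambda>x. f'' x * x) has_integral (b * f' b - f b) - (a * f' a - f a)) {a..b}"
proof -
  show "(f'' has_integral f' b - f' a) {a..b}"
    using assms(1) f''
    by (intro fundamental_theorem_of_calculus)
      (auto simp flip: has_real_derivative_iff_has_vector_derivative intro: has_field_derivative_at_within)
  have "((\<lambda>x. x * f' x - f x) has_real_derivative f'' x * x) (at x)" if "x \<in> {a..b}" for x
    using DERIV_diff[OF DERIV_mult[OF DERIV_ident f''[OF that]] f'[OF that]]
    by (simp add: algebra_simps)
  then show "((\<lambda>x. f'' x * x) has_integral (b * f' b - f b) - (a * f' a - f a)) {a..b}"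
    using assms(1) fundamental_theorem_of_calculus[of a b "\<lambda>x. x * f' x - f x" "\<lambda>x. f'' x * x"]
    by (auto simp flip: has_real_derivative_iff_has_vector_derivative intro: has_field_derivative_at_within)
qed

lemma eq_0_if_index_weighted_sum_le:
  fixes c :: "nat \<Rightarrow> real"
  assumes nonneg: "\<And>n. 0 \<le> c n" and below: "\<And>n. n < m \<Longrightarrow> c n = 0"
    and S: "c sums S" and T: "(\<lambda>n. real n * c n) sums T" and "T \<le> real m * S" and "n \<noteq> m"
  shows "c n = 0"
proof -
  define d where "d n = (real n - real m) * c n" for n
  have d_nonneg: "0 \<le> d n" for n
    using nonneg[of n] below[of n] unfolding d_def by (cases "n < m") auto
  have d_sums: "d sums (T - real m * S)"
    unfolding d_def left_diff_distrib using sums_diff[OF T sums_mult[OF S, of "real m"]] .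
  then have "T - real m * S = 0"
    using sums_le[OF d_nonneg sums_zero d_sums] \<open>T \<le> real m * S\<close> by simp
  then have "\<forall>n. d n = 0"
    using suminf_eq_zero_iff[OF sums_summable[OF d_sums] d_nonneg] sums_unique[OF d_sums] by simp
  then show ?thesis using \<open>n \<noteq> m\<close> by (auto simp: d_def)
qed

definition model_coeff :: "(nat \<Rightarrow> real) \<Rightarrow> nat \<Rightarrow> real" where
  "model_coeff \<beta> p = (if 2 \<le> p then (\<beta> p)^2 else 0)"

definition xi' :: "(nat \<Rightarrow> real) \<Rightarrow> real \<Rightarrow> real" where
  "xi' \<beta> t = (\<Sum>p. diffs (model_coeff \<beta>) p * t^p)"

definition xi'' :: "(nat \<Rightarrow> real) \<Rightarrow> real \<Rightarrow> real" where
  "xi'' \<beta> t = (\<Sum>p. diffs (diffs (model_coeff \<beta>)) p * t^p)"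

lemma xi_eq_powser: "xi \<beta> = (\<lambda>t. \<Sum>p. model_coeff \<beta> p * t^p)"
  unfolding xi_def model_coeff_def by (intro ext arg_cong[where f = suminf]) auto

lemma xi_zero: "xi \<beta> 0 = 0" and xi'_zero: "xi' \<beta> 0 = 0"
  by (simp_all add: xi_eq_powser xi'_def diffs_def model_coeff_def)

lemma model_powser_summable:
  assumes "is_model \<beta>"
  obtains K :: real where "1 < K" and "\<And>z. \<bar>z\<bar> < K \<Longrightarrow> summable (\<lambda>p. model_coeff \<beta> p * z^p)"
proof -
  obtain \<epsilon> :: real where "0 < \<epsilon>"
    and "summable (\<lambda>p. if 2 \<le> p then (\<beta> p)^2 * (1 + \<epsilon>)^p else 0)"
    using assms unfolding is_model_def by blast
  moreover have "(\<lambda>p. model_coeff \<beta> p * (1 + \<epsilon>)^p)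
      = (\<lambda>p. if 2 \<le> p then (\<beta> p)^2 * (1 + \<epsilon>)^p else 0)"
    by (simp add: model_coeff_def fun_eq_iff)
  ultimately have "summable (\<lambda>p. model_coeff \<beta> p * (1 + \<epsilon>)^p)" by simp
  then show ?thesis
    using \<open>0 < \<epsilon>\<close> powser_inside[of "model_coeff \<beta>" "1 + \<epsilon>"] by (intro that[of "1 + \<epsilon>"]) auto
qed

lemma model_xi_derivatives:
  assumes "is_model \<beta>"
  obtains K :: real where "1 < K"
    and "\<And>x. \<bar>x\<bar> < K \<Longrightarrow> (xi \<beta> has_real_derivative xi' \<beta> x) (at x)"
    and "\<And>x. \<bar>x\<bar> < K \<Longrightarrow> (xi' \<beta> has_real_derivative xi'' \<beta> x) (at x)"
    and "\<And>x. 0 \<le> x \<Longrightarrow> x < K \<Longrightarrow> 0 \<le> xi'' \<beta> x"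
proof -
  obtain K where "1 < K" and summ: "\<And>z. \<bar>z\<bar> < K \<Longrightarrow> summable (\<lambda>p. model_coeff \<beta> p * z^p)"
    using model_powser_summable[OF assms] by blast
  have summ': "summable (\<lambda>p. diffs (model_coeff \<beta>) p * z^p)" if "\<bar>z\<bar> < K" for z
    by (rule termdiff_converges[of _ K]) (use summ that in auto)
  have summ'': "summable (\<lambda>p. diffs (diffs (model_coeff \<beta>)) p * z^p)" if "\<bar>z\<bar> < K" for z
    by (rule termdiff_converges[of _ K]) (use summ' that in auto)
  show ?thesis
  proof (rule that[OF \<open>1 < K\<close>])
    fix x :: real assume "\<bar>x\<bar> < K"
    show "(xi \<beta> has_real_derivative xi' \<beta> x) (at x)"
      unfolding xi_eq_powser xi'_def by (rule termdiffs_strong') (use summ \<open>\<bar>x\<bar> < K\<close> in auto)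
    show "(xi' \<beta> has_real_derivative xi'' \<beta> x) (at x)"
      unfolding xi'_def xi''_def by (rule termdiffs_strong') (use summ' \<open>\<bar>x\<bar> < K\<close> in auto)
  next
    fix x :: real assume "0 \<le> x" "x < K"
    then show "0 \<le> xi'' \<beta> x"
      unfolding xi''_def by (intro suminf_nonneg summ'') (auto simp: diffs_def model_coeff_def)
  qed
qed

lemma model_coeff_sums:
  assumes "is_model \<beta>"
  shows "model_coeff \<beta> sums xi \<beta> 1" and "(\<lambda>p. real p * model_coeff \<beta> p) sums xi' \<beta> 1"
proof -
  obtain K where "1 < K" and summ: "\<And>z. \<bar>z\<bar> < K \<Longrightarrow> summable (\<lambda>p. model_coeff \<beta> p * z^p)"
    using model_powser_summable[OF assms] by blast
  show "model_coeff \<beta> sums xi \<beta> 1"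
    using summ[of 1] \<open>1 < K\<close> by (simp add: xi_eq_powser summable_sums)
  have "summable (\<lambda>p. diffs (model_coeff \<beta>) p * 1^p)"
    by (rule termdiff_converges[of _ K]) (use summ \<open>1 < K\<close> in auto)
  then have "diffs (model_coeff \<beta>) sums xi' \<beta> 1"
    by (simp add: xi'_def summable_sums)
  then have "(\<lambda>p. (\<lambda>p. real p * model_coeff \<beta> p) (Suc p)) sums xi' \<beta> 1"
    by (simp add: diffs_def)
  then show "(\<lambda>p. real p * model_coeff \<beta> p) sums xi' \<beta> 1"
    by (subst (asm) sums_Suc_iff) simp
qed

lemma xi_second_derivative_moments:
  assumes "is_model \<beta>"
  shows "\<And>x. x \<in> {0..1} \<Longrightarrow> 0 \<le> deriv (deriv (xi \<beta>)) x"
    and "(deriv (deriv (xi \<beta>)) has_integral xi' \<beta> 1) {0..1}"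
    and "((\<lambda>x. deriv (deriv (xi \<beta>)) x * x) has_integral xi' \<beta> 1 - xi \<beta> 1) {0..1}"
proof -
  obtain K where "1 < K"
    and d1: "\<And>x. \<bar>x\<bar> < K \<Longrightarrow> (xi \<beta> has_real_derivative xi' \<beta> x) (at x)"
    and d2: "\<And>x. \<bar>x\<bar> < K \<Longrightarrow> (xi' \<beta> has_real_derivative xi'' \<beta> x) (at x)"
    and nonneg: "\<And>x. 0 \<le> x \<Longrightarrow> x < K \<Longrightarrow> 0 \<le> xi'' \<beta> x"
    using model_xi_derivatives[OF assms] by metis
  have in_K: "\<bar>x\<bar> < K" if "x \<in> {0..1}" for x using that \<open>1 < K\<close> by auto
  have G: "deriv (deriv (xi \<beta>)) x = xi'' \<beta> x" if "x \<in> {0..1}" for x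
    by (rule deriv_deriv_eqI[of "{-K<..<K}" x "xi \<beta>" "xi' \<beta>"])
      (use in_K[OF that] d1 d2 in \<open>auto simp: abs_less_iff\<close>)
  show "0 \<le> deriv (deriv (xi \<beta>)) x" if "x \<in> {0..1}" for x
    using G[OF that] nonneg[of x] in_K[OF that] that by simp
  have "(xi \<beta> has_real_derivative xi' \<beta> x) (at x)" "(xi' \<beta> has_real_derivative xi'' \<beta> x) (at x)"
    if "x \<in> {0..1}" for x
    using d1 d2 in_K[OF that] by blast+
  note integrals = has_integral_second_derivative[OF zero_le_one this]
  have "(xi'' \<beta> has_integral xi' \<beta> 1) {0..1}"
    using integrals(1) by (simp add: xi'_zero)
  then show "(deriv (deriv (xi \<beta>)) has_integral xi' \<beta> 1) {0..1}"
    by (rule has_integral_cong[THEN iffD2, rotated]) (simp add: G)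
  have "((\<lambda>x. xi'' \<beta> x * x) has_integral xi' \<beta> 1 - xi \<beta> 1) {0..1}"
    using integrals(2) by (simp add: xi_zero)
  then show "((\<lambda>x. deriv (deriv (xi \<beta>)) x * x) has_integral xi' \<beta> 1 - xi \<beta> 1) {0..1}"
    by (rule has_integral_cong[THEN iffD2, rotated]) (simp add: G)
qed

lemma xi_SK_if_moment_bound:
  assumes "is_model \<beta>" and "xi' \<beta> 1 \<le> 2 * xi \<beta> 1"
  shows "\<exists>a>0. \<forall>t. xi \<beta> t = a * t^2"
proof -
  have vanish: "model_coeff \<beta> p = 0" if "p \<noteq> 2" for p
  proof (rule eq_0_if_index_weighted_sum_le[where m = 2])
    show "model_coeff \<beta> sums xi \<beta> 1" "(\<lambda>p. real p * model_coeff \<beta> p) sums xi' \<beta> 1"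
      using model_coeff_sums[OF assms(1)] by blast+
  qed (use assms(2) that in \<open>simp_all add: model_coeff_def\<close>)
  have "xi \<beta> t = (\<Sum>p\<in>{2}. model_coeff \<beta> p * t^p)" for t
    unfolding xi_eq_powser by (rule suminf_finite) (auto simp: vanish)
  moreover obtain p where "2 \<le> p" "\<beta> p \<noteq> 0" using assms(1) unfolding is_model_def by blast
  then have "0 < model_coeff \<beta> 2"
    using vanish[of p] by (cases "p = 2") (auto simp: model_coeff_def)
  ultimately show ?thesis by auto
qed

lemma xi_SK_if_constant_minimizer:
  assumes model: "is_model \<beta>" and min: "is_minimizer \<beta> \<phi>" and const: "\<forall>x\<in>{0..1}. \<phi> x = c"
  shows "\<exists>a>0. \<forall>t. xi \<beta> t = a * t^2"
proof -
  let ?G = "deriv (deriv (xi \<beta>))"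
  note moments = xi_second_derivative_moments[OF model]
  have const_min: "energy ?G (\<lambda>_. c) \<le> energy ?G \<psi>" if "\<psi> \<in> classC" for \<psi>
  proof -
    have "energy ?G (\<lambda>_. c) = energy ?G \<phi>" using const by (intro energy_cong) simp
    also have "\<dots> \<le> energy ?G \<psi>" using min that by (simp add: is_minimizer_def P0_eq_energy)
    finally show ?thesis .
  qed
  have "0 \<le> c" using min const by (auto simp: is_minimizer_def classC_def)
  then have "0 < c" using constant_minimizer_pos[OF moments(1,2) _ const_min] by blast
  then have "2 * (xi' \<beta> 1 - xi \<beta> 1) \<le> xi' \<beta> 1"
    using constant_minimizer_moment_bound[OF moments _ const_min] by blast
  then show ?thesis by (intro xi_SK_if_moment_bound[OF model]) simp
qed

lemma constant_minimizer_if_xi_SK: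
  assumes "0 < a" and "\<forall>t. xi \<beta> t = a * t^2"
  shows "is_minimizer \<beta> (\<lambda>_. 1 / sqrt (2 * a))"
proof -
  have "xi \<beta> = (\<lambda>t. a * t^2)" using assms(2) by auto
  then have "deriv (xi \<beta>) = (\<lambda>t. 2 * a * t)"
    by (intro ext DERIV_imp_deriv) (auto intro!: derivative_eq_intros)
  then have "deriv (deriv (xi \<beta>)) = (\<lambda>_. 2 * a)"
    by (intro ext DERIV_imp_deriv) (auto intro!: derivative_eq_intros)
  then show ?thesis
    using energy_const_weight_minimizer[of "2 * a"] const_in_classC[of "1 / sqrt (2 * a)"] \<open>0 < a\<close>
    by (simp add: is_minimizer_def P0_eq_energy)
qed

theorem lemma1p19:
  fixes \<beta> :: "nat \<Rightarrow> real" and \<phi> :: "real \<Rightarrow> real"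
  assumes "is_model \<beta>"
    and "is_minimizer \<beta> \<phi>"
    and "\<forall>\<psi>. is_minimizer \<beta> \<psi> \<longrightarrow> (\<forall>x\<in>{0..1}. \<psi> x = \<phi> x)"
  shows "(\<exists>c. \<forall>x\<in>{0..1}. \<phi> x = c) \<longleftrightarrow> (\<exists>a>0. \<forall>t. xi \<beta> t = a * t^2)"
proof
  assume "\<exists>c. \<forall>x\<in>{0..1}. \<phi> x = c"
  then show "\<exists>a>0. \<forall>t. xi \<beta> t = a * t^2"
    using xi_SK_if_constant_minimizer[OF assms(1,2)] by blast
next
  assume "\<exists>a>0. \<forall>t. xi \<beta> t = a * t^2"
  then obtain a where "0 < a" and "\<forall>t. xi \<beta> t = a * t^2" by blast
  then have "is_minimizer \<beta> (\<lambda>_. 1 / sqrt (2 * a))" by (rule constant_minimizer_if_xi_SK)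
  then show "\<exists>c. \<forall>x\<in>{0..1}. \<phi> x = c" using assms(3) by metis
qed

end
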